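(* Let $\psi:[t_0,\infty)\to(0,\infty)$ be continuous and non-increasing, such that $t\mapsto t\psi(t)$ is non-decreasing and $t\psi(t)<1$ for all $t\ge t_0$. Then there exists a unique continuous non-increasing function $r:[s_0,\infty)\to(0,\infty)$, where $s_0=\frac12\log t_0-\frac12\log\psi(t_0)$, such that $s\mapsto s+r(s)$ is non-decreasing and $$\psi(e^{s-r(s)})=e^{-s-r(s)}\quad\text{for all } s\ge s_0.$$ Conversely, given a continuous non-increasing function $r:[s_0,\infty)\to(0,\infty)$ such that $s\mapsto s+r(s)$ is non-decreasing, there exists a unique continuous non-increasing function $\psi:[t_0,\infty)\to(0,\infty)$ with $t_0=e^{s_0-r(s_0)}$ such that $t\mapsto t\psi(t)$ is non-decreasing, $t\psi(t)<1$ for all $t\ge t_0$, and $\psi(e^{s-r(s)})=e^{-s-r(s)}$ for all $s\ge s_0$. Furthermore, for such corresponding $\psi$ and $r$, if $\lim_{t\to\infty}t\psi(t)=1$ (equivalently $\lim_{s\to\infty}r(s)=0$), then the series $$\sum_n\frac{-(1-n\psi(n))\log(1-n\psi(n))}{n}$$ diverges if and only if the series $\sum_n r(n)\log\big(\frac{1}{r(n)}\big)$ diverges. *)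

theory Defs
  imports "HOL-Analysis.Analysis"
begin

text \<open>Admissible psi on the domain [t0, infinity) (functions are total; only values on the domain matter).\<close>
definition psi_adm :: "real \<Rightarrow> (real \<Rightarrow> real) \<Rightarrow> bool" where
  "psi_adm t0 \<psi> \<longleftrightarrow> t0 > 0 \<and> (\<forall>t\<ge>t0. \<psi> t > 0) \<and> continuous_on {t0..} \<psi> \<and>
     antimono_on {t0..} \<psi> \<and> mono_on {t0..} (\<lambda>t. t * \<psi> t) \<and> (\<forall>t\<ge>t0. t * \<psi> t < 1)"

definition r_adm :: "real \<Rightarrow> (real \<Rightarrow> real) \<Rightarrow> bool" where
  "r_adm s0 r \<longleftrightarrow> (\<forall>s\<ge>s0. r s > 0) \<and> continuous_on {s0..} r \<and>
     antimono_on {s0..} r \<and> mono_on {s0..} (\<lambda>s. s + r s)"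

definition corresp :: "real \<Rightarrow> (real \<Rightarrow> real) \<Rightarrow> real \<Rightarrow> (real \<Rightarrow> real) \<Rightarrow> bool" where
  "corresp t0 \<psi> s0 r \<longleftrightarrow>
     (\<forall>s\<ge>s0. t0 \<le> exp (s - r s) \<and> \<psi> (exp (s - r s)) = exp (- s - r s))"

end

theory Submission
  imports Defs "HOL-Real_Asymp.Real_Asymp"
begin

(* Writing t = exp (s - r s), the correspondence says psi t = exp (-s - r s), i.e.
   s = (ln t - ln (psi t)) / 2 and r s = - ln (t * psi t) / 2.  Under the respective
   hypotheses both t |-> (ln t - ln (psi t)) / 2 and s |-> exp (s - r s) are continuous,
   strictly increasing and unbounded, hence homeomorphisms of half-lines, and either of
   psi, r determines the other through the inverse map.

   For the series put G x = x ln (1/x), increasing on (0, 1/e].  Cauchy condensation turns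
   the psi-series into sum_k G (1 - 2^k psi (2^k)) = sum_k G (1 - exp (-2 r (s_k))), where
   s_k - r s_k = k ln 2.  Since G (1 - exp (-2x)) ~ 2 G x as x -> 0+ and
   k/2 <= s_k <= k + r s0, monotonicity of G o r compares this with sum_n G (r n). *)

section \<open>Inverse of an increasing homeomorphism of a half-line\<close>

lemma continuous_mono_image_Icc:
  fixes f :: "real \<Rightarrow> real"
  assumes "continuous_on {a..b} f" "mono_on {a..b} f" "a \<le> b"
  shows "f ` {a..b} = {f a..f b}"
proof
  show "f ` {a..b} \<subseteq> {f a..f b}"
    using monotone_onD[OF assms(2)] assms(3) by auto
  show "{f a..f b} \<subseteq> f ` {a..b}"
    using IVT'[of f a _ b] assms(1,3) by force
qed

lemma continuous_strict_mono_inverse: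
  fixes f :: "real \<Rightarrow> real"
  assumes cont: "continuous_on {a..} f" and smono: "strict_mono_on {a..} f"
    and unbounded: "filterlim f at_top at_top"
  obtains g where "\<And>y. f a \<le> y \<Longrightarrow> a \<le> g y \<and> f (g y) = y"
    and "\<And>x. a \<le> x \<Longrightarrow> g (f x) = x"
    and "continuous_on {f a..} g" and "mono_on {f a..} g"
proof -
  have inj: "inj_on f {a..}"
    using smono by (rule strict_mono_on_imp_inj_on)
  have image_Icc: "f ` {a..b} = {f a..f b}" if "a \<le> b" for b
    using continuous_on_subset[OF cont] mono_on_subset[OF strict_mono_on_imp_mono_on[OF smono]] that
    by (intro continuous_mono_image_Icc) auto
  have image: "f ` {a..} = {f a..}"
  proof
    show "f ` {a..} \<subseteq> {f a..}"
      using strict_mono_on_leD[OF smono] by auto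
    show "{f a..} \<subseteq> f ` {a..}"
    proof
      fix y assume y: "y \<in> {f a..}"
      obtain b where "\<And>x. b \<le> x \<Longrightarrow> y \<le> f x"
        using unbounded by (auto simp: filterlim_at_top eventually_at_top_linorder)
      then have "y \<in> f ` {a..max a b}"
        using image_Icc[of "max a b"] y by simp
      then show "y \<in> f ` {a..}"
        by auto
    qed
  qed
  define g where "g = the_inv_into {a..} f"
  have g_inv: "a \<le> g y \<and> f (g y) = y" if "f a \<le> y" for y
    using the_inv_into_into[OF inj, of y] f_the_inv_into_f[OF inj, of y] image that
    unfolding g_def by auto
  have g_f: "g (f x) = x" if "a \<le> x" for x
    using the_inv_into_f_f[OF inj] that unfolding g_def by auto
  have g_mono: "mono_on {f a..} g"
  proof (rule mono_onI)
    fix y y' assume "y \<in> {f a..}" "y' \<in> {f a..}" "y \<le> y'"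
    then show "g y \<le> g y'"
      using g_inv[of y] g_inv[of y'] strict_mono_onD[OF smono, of "g y'" "g y"] by force
  qed
  have "continuous_on {f a..} g"
    unfolding continuous_on_eq_continuous_within
  proof
    fix y assume y: "y \<in> {f a..}"
    define b where "b = g y + 1"
    have "a \<le> g y" "f (g y) = y"
      using g_inv y by auto
    then have b: "a \<le> b" "y < f b"
      using strict_mono_onD[OF smono, of "g y" b] unfolding b_def by auto
    \<comment> \<open>Near \<open>y\<close>, \<open>g\<close> is the inverse of \<open>f\<close> on the compact interval \<open>{a..b}\<close>.\<close>
    have "continuous_on (f ` {a..b}) g"
      using continuous_on_inv[OF continuous_on_subset[OF cont] compact_Icc, of a b g] g_f by auto
    then have "continuous (at y within {f a..f b}) g"
      using y b image_Icc[OF b(1)] by (simp add: continuous_on_eq_continuous_within)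
    moreover have "at y within {f a..} = at y within {f a..f b}"
      by (rule at_within_nhd[of _ "{..<f b}"]) (use b in auto)
    ultimately show "continuous (at y within {f a..}) g"
      by simp
  qed
  with g_inv g_f g_mono that show ?thesis
    by blast
qed

section \<open>From \<open>\<psi>\<close> to \<open>r\<close>\<close>

definition psi_to_s :: "(real \<Rightarrow> real) \<Rightarrow> real \<Rightarrow> real" where
  "psi_to_s \<psi> t = ln t / 2 - ln (\<psi> t) / 2"

lemma corresp_psi_to_s:
  assumes "corresp t0 \<psi> s0 r" "s0 \<le> s"
  shows "psi_to_s \<psi> (exp (s - r s)) = s"
  using assms unfolding corresp_def psi_to_s_def by (simp add: field_simps)

lemma psi_adm_strict_mono_psi_to_s:
  assumes "psi_adm t0 \<psi>"
  shows "strict_mono_on {t0..} (psi_to_s \<psi>)"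
proof (rule strict_mono_onI)
  fix t t' :: real assume "t \<in> {t0..}" "t' \<in> {t0..}" "t < t'"
  moreover have "t0 > 0" "\<psi> t' \<le> \<psi> t" "\<psi> t' > 0"
    using assms calculation unfolding psi_adm_def monotone_on_def by auto
  ultimately have "ln t < ln t'" "ln (\<psi> t') \<le> ln (\<psi> t)"
    by auto
  then show "psi_to_s \<psi> t < psi_to_s \<psi> t'"
    unfolding psi_to_s_def by simp
qed

lemma psi_adm_continuous_psi_to_s:
  assumes "psi_adm t0 \<psi>"
  shows "continuous_on {t0..} (psi_to_s \<psi>)"
  using assms unfolding psi_adm_def psi_to_s_def
  by (auto intro!: continuous_intros simp: less_imp_neq[symmetric])

lemma psi_adm_psi_to_s_at_top:
  assumes "psi_adm t0 \<psi>"
  shows "filterlim (psi_to_s \<psi>) at_top at_top"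
proof (rule filterlim_at_top_mono)
  show "filterlim (\<lambda>t. ln t / 2 - ln (\<psi> t0) / 2) at_top at_top"
    by real_asymp
  have "ln (\<psi> t) \<le> ln (\<psi> t0)" if "t \<ge> t0" for t
    using assms that unfolding psi_adm_def monotone_on_def by auto
  then show "eventually (\<lambda>t. ln t / 2 - ln (\<psi> t0) / 2 \<le> psi_to_s \<psi> t) at_top"
    unfolding psi_to_s_def by (intro eventually_mono[OF eventually_ge_at_top[of t0]]) force
qed

lemma psi_adm_psi_to_s_inverse:
  assumes adm: "psi_adm t0 \<psi>"
  obtains \<tau> where "\<And>s. psi_to_s \<psi> t0 \<le> s \<Longrightarrow> t0 \<le> \<tau> s \<and> psi_to_s \<psi> (\<tau> s) = s"
    and "continuous_on {psi_to_s \<psi> t0..} \<tau>" and "mono_on {psi_to_s \<psi> t0..} \<tau>"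
  using continuous_strict_mono_inverse[OF psi_adm_continuous_psi_to_s[OF adm]
      psi_adm_strict_mono_psi_to_s[OF adm] psi_adm_psi_to_s_at_top[OF adm]]
  by metis

lemma psi_adm_unique_r:
  assumes "psi_adm t0 \<psi>" "corresp t0 \<psi> s0 r" "corresp t0 \<psi> s0 r'" "s0 \<le> s"
  shows "r s = r' s"
proof -
  have "exp (s - r' s) = exp (s - r s)"
  proof (rule strict_mono_on_eqD[OF psi_adm_strict_mono_psi_to_s[OF assms(1)]])
    show "psi_to_s \<psi> (exp (s - r s)) = psi_to_s \<psi> (exp (s - r' s))"
      using corresp_psi_to_s assms(2-4) by metis
    show "exp (s - r s) \<in> {t0..}" "exp (s - r' s) \<in> {t0..}"
      using assms(2-4) unfolding corresp_def by auto
  qed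
  then show ?thesis
    by simp
qed

lemma psi_to_s_ln_eqs:
  assumes "0 < t" "0 < \<psi> t" "psi_to_s \<psi> t = s"
  shows "s - ln t = - ln (t * \<psi> t) / 2" and "s + (s - ln t) = - ln (\<psi> t)"
proof -
  have "ln (t * \<psi> t) = ln t + ln (\<psi> t)"
    using assms(1,2) by (simp add: ln_mult)
  then show "s - ln t = - ln (t * \<psi> t) / 2" "s + (s - ln t) = - ln (\<psi> t)"
    using assms(3) unfolding psi_to_s_def by linarith+
qed

lemma r_adm_of_psi_to_s_inverse:
  assumes adm: "psi_adm t0 \<psi>"
    and \<tau>: "\<And>s. s0 \<le> s \<Longrightarrow> t0 \<le> \<tau> s \<and> psi_to_s \<psi> (\<tau> s) = s"
    and \<tau>_cont: "continuous_on {s0..} \<tau>" and \<tau>_mono: "mono_on {s0..} \<tau>"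
  shows "r_adm s0 (\<lambda>s. s - ln (\<tau> s))"
proof -
  have t0: "t0 > 0" and pos: "\<And>t. t0 \<le> t \<Longrightarrow> \<psi> t > 0"
    and anti: "antimono_on {t0..} \<psi>" and tpsi_mono: "mono_on {t0..} (\<lambda>t. t * \<psi> t)"
    and lt1: "\<And>t. t0 \<le> t \<Longrightarrow> t * \<psi> t < 1"
    using adm unfolding psi_adm_def by auto
  have \<tau>_pos: "\<tau> s > 0" and tpsi_pos: "\<tau> s * \<psi> (\<tau> s) > 0" if "s0 \<le> s" for s
    using \<tau>[OF that] t0 pos[of "\<tau> s"] by auto
  have r_eq: "s - ln (\<tau> s) = - ln (\<tau> s * \<psi> (\<tau> s)) / 2"
    and sr_eq: "s + (s - ln (\<tau> s)) = - ln (\<psi> (\<tau> s))" if "s0 \<le> s" for s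
    using psi_to_s_ln_eqs[of "\<tau> s" \<psi> s] \<tau>[OF that] \<tau>_pos[OF that] pos by simp_all
  show ?thesis
    unfolding r_adm_def
  proof (intro conjI allI impI)
    fix s assume s: "s0 \<le> s"
    then have "ln (\<tau> s * \<psi> (\<tau> s)) < 0"
      using \<tau> lt1 tpsi_pos by simp
    then show "s - ln (\<tau> s) > 0"
      using r_eq[OF s] by simp
  next
    show "continuous_on {s0..} (\<lambda>s. s - ln (\<tau> s))"
      by (intro continuous_intros \<tau>_cont) (use \<tau>_pos in fastforce)
  next
    show "antimono_on {s0..} (\<lambda>s. s - ln (\<tau> s))"
    proof (rule monotone_onI)
      fix s s' assume s: "s \<in> {s0..}" "s' \<in> {s0..}" "s \<le> s'"
      then have "\<tau> s * \<psi> (\<tau> s) \<le> \<tau> s' * \<psi> (\<tau> s')"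
        using monotone_onD[OF \<tau>_mono] monotone_onD[OF tpsi_mono] \<tau> by simp
      then have "ln (\<tau> s * \<psi> (\<tau> s)) \<le> ln (\<tau> s' * \<psi> (\<tau> s'))"
        using tpsi_pos s by simp
      then show "s' - ln (\<tau> s') \<le> s - ln (\<tau> s)"
        using r_eq s by simp
    qed
  next
    show "mono_on {s0..} (\<lambda>s. s + (s - ln (\<tau> s)))"
    proof (rule monotone_onI)
      fix s s' assume s: "s \<in> {s0..}" "s' \<in> {s0..}" "s \<le> s'"
      then have "\<psi> (\<tau> s') \<le> \<psi> (\<tau> s)"
        using monotone_onD[OF \<tau>_mono] monotone_onD[OF anti] \<tau> by simp
      then have "ln (\<psi> (\<tau> s')) \<le> ln (\<psi> (\<tau> s))"
        using pos \<tau> s by simp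
      then show "s + (s - ln (\<tau> s)) \<le> s' + (s' - ln (\<tau> s'))"
        using sr_eq s by simp
    qed
  qed
qed

lemma psi_adm_ex_r:
  assumes adm: "psi_adm t0 \<psi>"
  shows "\<exists>r. r_adm (psi_to_s \<psi> t0) r \<and> corresp t0 \<psi> (psi_to_s \<psi> t0) r"
proof -
  define s0 where "s0 = psi_to_s \<psi> t0"
  obtain \<tau> where \<tau>: "\<And>s. s0 \<le> s \<Longrightarrow> t0 \<le> \<tau> s \<and> psi_to_s \<psi> (\<tau> s) = s"
    and \<tau>_cont: "continuous_on {s0..} \<tau>" and \<tau>_mono: "mono_on {s0..} \<tau>"
    using psi_adm_psi_to_s_inverse[OF adm] unfolding s0_def by metis
  have t0: "t0 > 0" and pos: "\<And>t. t0 \<le> t \<Longrightarrow> \<psi> t > 0"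
    using adm unfolding psi_adm_def by auto
  have "corresp t0 \<psi> s0 (\<lambda>s. s - ln (\<tau> s))"
    unfolding corresp_def
  proof (intro allI impI conjI)
    fix s assume s: "s0 \<le> s"
    then have "\<tau> s > 0" "\<psi> (\<tau> s) > 0"
      using \<tau> t0 pos by (auto intro: less_le_trans)
    moreover from calculation have "- s - (s - ln (\<tau> s)) = ln (\<psi> (\<tau> s))"
      using psi_to_s_ln_eqs(2)[of "\<tau> s" \<psi> s] \<tau>[OF s] by linarith
    ultimately show "t0 \<le> exp (s - (s - ln (\<tau> s)))"
      "\<psi> (exp (s - (s - ln (\<tau> s)))) = exp (- s - (s - ln (\<tau> s)))"
      using \<tau>[OF s] by simp_all
  qed
  then show ?thesis
    using r_adm_of_psi_to_s_inverse[OF adm \<tau> \<tau>_cont \<tau>_mono] unfolding s0_def by blast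
qed

section \<open>From \<open>r\<close> to \<open>\<psi>\<close>\<close>

lemma r_adm_exp_at_top:
  assumes "r_adm s0 r"
  shows "filterlim (\<lambda>s. exp (s - r s)) at_top at_top"
proof (rule filterlim_compose[OF exp_at_top filterlim_at_top_mono])
  show "filterlim (\<lambda>s. s - r s0) at_top at_top"
    by real_asymp
  have "r s \<le> r s0" if "s0 \<le> s" for s
    using assms that unfolding r_adm_def monotone_on_def by auto
  then show "eventually (\<lambda>s. s - r s0 \<le> s - r s) at_top"
    by (intro eventually_mono[OF eventually_ge_at_top[of s0]]) auto
qed

lemma r_adm_strict_mono_exp:
  assumes "r_adm s0 r"
  shows "strict_mono_on {s0..} (\<lambda>s. exp (s - r s))"
proof (rule strict_mono_onI)
  fix s s' assume "s \<in> {s0..}" "s' \<in> {s0..}" "s < s'"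
  moreover have "r s' \<le> r s"
    using assms calculation unfolding r_adm_def monotone_on_def by auto
  ultimately show "exp (s - r s) < exp (s' - r s')"
    by simp
qed

lemma r_adm_exp_inverse:
  assumes adm: "r_adm s0 r"
  obtains \<sigma> where "\<And>t. exp (s0 - r s0) \<le> t \<Longrightarrow> s0 \<le> \<sigma> t \<and> exp (\<sigma> t - r (\<sigma> t)) = t"
    and "\<And>s. s0 \<le> s \<Longrightarrow> \<sigma> (exp (s - r s)) = s"
    and "continuous_on {exp (s0 - r s0)..} \<sigma>" and "mono_on {exp (s0 - r s0)..} \<sigma>"
proof -
  have "continuous_on {s0..} (\<lambda>s. exp (s - r s))"
    using adm unfolding r_adm_def by (auto intro!: continuous_intros)
  from continuous_strict_mono_inverse[OF this r_adm_strict_mono_exp[OF adm] r_adm_exp_at_top[OF adm]]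
  show ?thesis
    using that by blast
qed

lemma psi_adm_of_exp_inverse:
  assumes adm: "r_adm s0 r" and "t0 > 0"
    and \<sigma>: "\<And>t. t0 \<le> t \<Longrightarrow> s0 \<le> \<sigma> t \<and> exp (\<sigma> t - r (\<sigma> t)) = t"
    and \<sigma>_cont: "continuous_on {t0..} \<sigma>" and \<sigma>_mono: "mono_on {t0..} \<sigma>"
  shows "psi_adm t0 (\<lambda>t. exp (- \<sigma> t - r (\<sigma> t)))"
proof -
  have pos: "\<And>s. s0 \<le> s \<Longrightarrow> r s > 0" and r_cont: "continuous_on {s0..} r"
    and anti: "antimono_on {s0..} r" and sr_mono: "mono_on {s0..} (\<lambda>s. s + r s)"
    using adm unfolding r_adm_def by auto
  have tpsi: "t * exp (- \<sigma> t - r (\<sigma> t)) = exp (- 2 * r (\<sigma> t))" if "t0 \<le> t" for t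
  proof -
    have "t * exp (- \<sigma> t - r (\<sigma> t)) = exp (\<sigma> t - r (\<sigma> t)) * exp (- \<sigma> t - r (\<sigma> t))"
      using \<sigma>[OF that] by simp
    also have "\<dots> = exp (- 2 * r (\<sigma> t))"
      by (simp flip: exp_add)
    finally show ?thesis .
  qed
  show ?thesis
    unfolding psi_adm_def
  proof (intro conjI allI impI)
    show "t0 > 0" "\<And>t. exp (- \<sigma> t - r (\<sigma> t)) > 0"
      using \<open>t0 > 0\<close> by auto
  next
    have "continuous_on {t0..} (\<lambda>t. r (\<sigma> t))"
      by (rule continuous_on_compose2[OF r_cont \<sigma>_cont]) (use \<sigma> in auto)
    then show "continuous_on {t0..} (\<lambda>t. exp (- \<sigma> t - r (\<sigma> t)))"
      by (auto intro!: continuous_intros \<sigma>_cont)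
  next
    show "antimono_on {t0..} (\<lambda>t. exp (- \<sigma> t - r (\<sigma> t)))"
    proof (rule monotone_onI)
      fix t t' assume "t \<in> {t0..}" "t' \<in> {t0..}" "t \<le> t'"
      then have "\<sigma> t + r (\<sigma> t) \<le> \<sigma> t' + r (\<sigma> t')"
        using monotone_onD[OF \<sigma>_mono] monotone_onD[OF sr_mono] \<sigma> by auto
      then show "exp (- \<sigma> t' - r (\<sigma> t')) \<le> exp (- \<sigma> t - r (\<sigma> t))"
        by simp
    qed
  next
    show "mono_on {t0..} (\<lambda>t. t * exp (- \<sigma> t - r (\<sigma> t)))"
    proof (rule monotone_onI)
      fix t t' assume "t \<in> {t0..}" "t' \<in> {t0..}" "t \<le> t'"
      then have "r (\<sigma> t') \<le> r (\<sigma> t)"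
        using monotone_onD[OF \<sigma>_mono] monotone_onD[OF anti] \<sigma> by auto
      then show "t * exp (- \<sigma> t - r (\<sigma> t)) \<le> t' * exp (- \<sigma> t' - r (\<sigma> t'))"
        using tpsi \<open>t \<in> {t0..}\<close> \<open>t' \<in> {t0..}\<close> by auto
    qed
  next
    fix t assume "t0 \<le> t"
    then show "t * exp (- \<sigma> t - r (\<sigma> t)) < 1"
      using tpsi pos \<sigma> by auto
  qed
qed

lemma r_adm_ex_psi:
  assumes adm: "r_adm s0 r"
  shows "\<exists>\<psi>. psi_adm (exp (s0 - r s0)) \<psi> \<and> corresp (exp (s0 - r s0)) \<psi> s0 r"
proof -
  define t0 where "t0 = exp (s0 - r s0)"
  obtain \<sigma> where \<sigma>: "\<And>t. t0 \<le> t \<Longrightarrow> s0 \<le> \<sigma> t \<and> exp (\<sigma> t - r (\<sigma> t)) = t"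
    and \<sigma>_exp: "\<And>s. s0 \<le> s \<Longrightarrow> \<sigma> (exp (s - r s)) = s"
    and \<sigma>_cont: "continuous_on {t0..} \<sigma>" and \<sigma>_mono: "mono_on {t0..} \<sigma>"
    using r_adm_exp_inverse[OF adm] unfolding t0_def by metis
  have "corresp t0 (\<lambda>t. exp (- \<sigma> t - r (\<sigma> t))) s0 r"
    unfolding corresp_def
  proof (intro allI impI conjI)
    fix s assume s: "s0 \<le> s"
    then show "t0 \<le> exp (s - r s)"
      unfolding t0_def using strict_mono_on_leD[OF r_adm_strict_mono_exp[OF adm]] by auto
    show "exp (- \<sigma> (exp (s - r s)) - r (\<sigma> (exp (s - r s)))) = exp (- s - r s)"
      using \<sigma>_exp[OF s] by simp
  qed
  moreover have "psi_adm t0 (\<lambda>t. exp (- \<sigma> t - r (\<sigma> t)))"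
    by (rule psi_adm_of_exp_inverse[OF adm _ \<sigma> \<sigma>_cont \<sigma>_mono]) (simp add: t0_def)
  ultimately show ?thesis
    unfolding t0_def by blast
qed

lemma r_adm_unique_psi:
  assumes "r_adm s0 r" "corresp t0 \<psi> s0 r" "corresp t0 \<psi>' s0 r" "exp (s0 - r s0) \<le> t"
  shows "\<psi> t = \<psi>' t"
proof -
  obtain \<sigma> where "\<And>t. exp (s0 - r s0) \<le> t \<Longrightarrow> s0 \<le> \<sigma> t \<and> exp (\<sigma> t - r (\<sigma> t)) = t"
    using r_adm_exp_inverse[OF assms(1)] by metis
  then obtain s where "s0 \<le> s" "t = exp (s - r s)"
    using assms(4) by metis
  then show ?thesis
    using assms(2,3) unfolding corresp_def by simp
qed

section \<open>Comparison tests for series with monotone terms\<close>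

lemma condensation_test_at_top:
  fixes f :: "real \<Rightarrow> real"
  assumes anti: "antimono_on {T..} f" and nonneg: "\<And>t. T \<le> t \<Longrightarrow> 0 \<le> f t"
  shows "summable (\<lambda>n. f (real n)) \<longleftrightarrow> summable (\<lambda>k. 2 ^ k * f (2 ^ k))"
proof -
  define N where "N = nat \<lceil>T\<rceil>"
  define g where "g n = f (real (max n N))" for n
  have N: "T \<le> real (max n N)" for n
    unfolding N_def by linarith
  have "summable (\<lambda>n. f (real n)) \<longleftrightarrow> summable g"
    by (intro summable_cong eventually_mono[OF eventually_ge_at_top[of N]]) (simp add: g_def)
  also have "\<dots> \<longleftrightarrow> summable (\<lambda>k. 2 ^ k * g (2 ^ k))"
  proof (rule condensation_test)
    show "g (Suc m) \<le> g m" for m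
      unfolding g_def using N by (intro monotone_onD[OF anti]) auto
    show "0 \<le> g n" for n
      unfolding g_def using N by (intro nonneg)
  qed
  also have "\<dots> \<longleftrightarrow> summable (\<lambda>k. 2 ^ k * f (2 ^ k))"
  proof (intro summable_cong eventually_mono[OF eventually_ge_at_top[of N]])
    fix k assume "N \<le> k"
    then have "max (2 ^ k) N = 2 ^ k"
      using less_exp[of k] by (intro max_absorb1) linarith
    then show "2 ^ k * g (2 ^ k) = 2 ^ k * f (2 ^ k)"
      unfolding g_def by simp
  qed
  finally show ?thesis .
qed

lemma summable_iff_asymp_equiv:
  fixes f g :: "nat \<Rightarrow> real"
  assumes equiv: "f \<sim>[sequentially] g" and nonneg: "eventually (\<lambda>n. 0 \<le> g n) sequentially"
  shows "summable f \<longleftrightarrow> summable g"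
proof -
  have "eventually (\<lambda>n. 0 \<le> f n) sequentially"
    using asymp_equiv_eventually_neg_iff[OF equiv] nonneg by eventually_elim auto
  then have norm_f: "summable (\<lambda>n. norm (f n)) \<longleftrightarrow> summable f"
    by (intro summable_cong) (auto elim: eventually_mono)
  have norm_g: "summable (\<lambda>n. norm (g n)) \<longleftrightarrow> summable g"
    using nonneg by (intro summable_cong) (auto elim: eventually_mono)
  show ?thesis
  proof
    assume "summable f"
    then show "summable g"
      using summable_comparison_test_bigo[OF _ asymp_equiv_imp_bigo[OF asymp_equiv_symI[OF equiv]]]
        norm_f by blast
  next
    assume "summable g"
    then show "summable f"
      using summable_comparison_test_bigo[OF _ asymp_equiv_imp_bigo[OF equiv]] norm_g by blast
  qed
qed

lemma summable_comp_div2: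
  fixes f :: "nat \<Rightarrow> real"
  assumes nonneg: "\<And>n. 0 \<le> f n" and "summable f"
  shows "summable (\<lambda>k. f (k div 2))"
proof (rule summableI_nonneg_bounded)
  fix n
  have "(\<Sum>k<n. f (k div 2)) \<le> (\<Sum>k<2 * n. f (k div 2))"
    by (rule sum_mono2) (auto simp: nonneg)
  also have "\<dots> = 2 * (\<Sum>m<n. f m)"
  proof (induction n)
    case (Suc n)
    have "2 * Suc n = Suc (Suc (2 * n))"
      by simp
    then have "(\<Sum>k<2 * Suc n. f (k div 2)) = (\<Sum>k<2 * n. f (k div 2)) + f n + f n"
      by (simp only: sum.lessThan_Suc) simp
    then show ?case
      using Suc.IH by simp
  qed simp
  also have "\<dots> \<le> 2 * suminf f"
    using sum_le_suminf[OF \<open>summable f\<close>, of "{..<n}"] nonneg by auto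
  finally show "(\<Sum>k<n. f (k div 2)) \<le> 2 * suminf f" .
qed (use nonneg in simp)

lemma summable_antimono_comp_imp_summable:
  fixes a :: "real \<Rightarrow> real" and x :: "nat \<Rightarrow> real"
  assumes anti: "antimono_on {S..} a" and nonneg: "\<And>s. S \<le> s \<Longrightarrow> 0 \<le> a s"
    and bounds: "eventually (\<lambda>k. S \<le> x k \<and> x k \<le> real k + C) sequentially"
    and summable: "summable (\<lambda>k. a (x k))"
  shows "summable (\<lambda>n. a (real n))"
proof -
  define M where "M = nat \<lceil>max S C\<rceil>"
  have "eventually (\<lambda>k. norm (a (real (k + M))) \<le> a (x k)) sequentially"
    using bounds
  proof eventually_elim
    case (elim k)
    then have "x k \<le> real (k + M)" "S \<le> real (k + M)"
      unfolding M_def by linarith+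
    then show ?case
      using elim monotone_onD[OF anti] nonneg by auto
  qed
  then have "summable (\<lambda>k. a (real (k + M)))"
    using summable by (rule summable_comparison_test_ev)
  then show ?thesis
    using summable_iff_shift[of "\<lambda>n. a (real n)" M] by simp
qed

lemma summable_imp_summable_antimono_comp:
  fixes a :: "real \<Rightarrow> real" and x :: "nat \<Rightarrow> real"
  assumes anti: "antimono_on {S..} a" and nonneg: "\<And>s. S \<le> s \<Longrightarrow> 0 \<le> a s"
    and bound: "eventually (\<lambda>k. real k / 2 \<le> x k) sequentially"
    and summable: "summable (\<lambda>n. a (real n))"
  shows "summable (\<lambda>k. a (x k))"
proof -
  define N where "N = nat \<lceil>S\<rceil>"
  define b where "b n = a (real (max n N))" for n
  have N: "S \<le> real n" if "N \<le> n" for n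
    using that unfolding N_def by linarith
  have b_nonneg: "0 \<le> b n" for n
    unfolding b_def using N by (intro nonneg) simp
  have "summable b"
    using summable
    by (subst summable_cong[OF eventually_mono[OF eventually_ge_at_top[of N]]]) (auto simp: b_def)
  then have "summable (\<lambda>k. b (k div 2))"
    by (rule summable_comp_div2[OF b_nonneg])
  moreover have "eventually (\<lambda>k. norm (a (x k)) \<le> b (k div 2)) sequentially"
    using bound eventually_ge_at_top[of "2 * N"]
  proof eventually_elim
    case (elim k)
    have "S \<le> real (k div 2)" "real (k div 2) \<le> x k"
      using elim N[of "k div 2"] by linarith+
    then show ?case
      unfolding b_def using elim monotone_onD[OF anti] nonneg by (auto simp: max_def)
  qed
  ultimately show ?thesis
    by (rule summable_comparison_test_ev[rotated])
qed

section \<open>Comparison of the two series\<close>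

lemma mono_on_x_ln_inverse: "mono_on {0<..exp (-1)} (\<lambda>x::real. x * ln (1 / x))"
proof (rule monotone_onI)
  fix x y :: real assume x: "x \<in> {0<..exp (-1)}" and y: "y \<in> {0<..exp (-1)}" and "x \<le> y"
  have "- (x * ln x) \<le> - (y * ln y)"
  proof (rule DERIV_nonneg_imp_increasing_open[OF \<open>x \<le> y\<close>])
    fix z assume "x < z" "z < y"
    then have "z > 0" "ln z \<le> -1"
      using x y ln_le_cancel_iff[of z "exp (-1)"] by auto
    then show "\<exists>d. ((\<lambda>z. - (z * ln z)) has_real_derivative d) (at z) \<and> 0 \<le> d"
      by (intro exI[of _ "- (ln z + 1)"]) (auto intro!: derivative_eq_intros)
  next
    show "continuous_on {x..y} (\<lambda>z. - (z * ln z))"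
      using x by (intro continuous_intros) auto
  qed
  then show "x * ln (1 / x) \<le> y * ln (1 / y)"
    using x y by (simp add: ln_div)
qed

lemma x_ln_inverse_nonneg:
  fixes x :: real
  assumes "0 < x" "x \<le> exp (-1)"
  shows "0 \<le> x * ln (1 / x)"
proof -
  have "x \<le> 1"
    using assms(2) by (rule order_trans) simp
  then show ?thesis
    using assms(1) by simp
qed

lemma corresp_tendsto_r_zero:
  assumes adm: "r_adm s0 r" and cor: "corresp t0 \<psi> s0 r"
    and lim: "((\<lambda>t. t * \<psi> t) \<longlongrightarrow> 1) at_top"
  shows "(r \<longlongrightarrow> 0) at_top"
proof -
  have "((\<lambda>s. exp (s - r s) * \<psi> (exp (s - r s))) \<longlongrightarrow> 1) at_top"
    using filterlim_compose[OF lim r_adm_exp_at_top[OF adm]] by simp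
  moreover have "eventually (\<lambda>s. exp (s - r s) * \<psi> (exp (s - r s)) = exp (- 2 * r s)) at_top"
    using cor unfolding corresp_def
    by (intro eventually_mono[OF eventually_ge_at_top[of s0]]) (simp flip: exp_add)
  ultimately have "((\<lambda>s. exp (- 2 * r s)) \<longlongrightarrow> 1) at_top"
    using tendsto_cong by fastforce
  then have "((\<lambda>s. - ln (exp (- 2 * r s)) / 2) \<longlongrightarrow> - ln 1 / 2) at_top"
    by (intro tendsto_intros) auto
  then show ?thesis
    by simp
qed

lemma psi_adm_eventually_close_to_one:
  assumes adm: "psi_adm t0 \<psi>" and lim: "((\<lambda>t. t * \<psi> t) \<longlongrightarrow> 1) at_top"
  obtains T where "t0 \<le> T" "1 \<le> T" and "\<And>t. T \<le> t \<Longrightarrow> 1 - t * \<psi> t \<in> {0<..exp (-1)}"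
proof -
  have lt1: "\<And>t. t0 \<le> t \<Longrightarrow> t * \<psi> t < 1"
    using adm unfolding psi_adm_def by auto
  have "eventually (\<lambda>t. 1 - exp (-1) < t * \<psi> t) at_top"
    using order_tendstoD(1)[OF lim] by simp
  then obtain T' where T': "\<And>t. T' \<le> t \<Longrightarrow> 1 - exp (-1) < t * \<psi> t"
    by (auto simp: eventually_at_top_linorder)
  show ?thesis
  proof (rule that[of "max t0 (max 1 T')"])
    fix t assume "max t0 (max 1 T') \<le> t"
    then show "1 - t * \<psi> t \<in> {0<..exp (-1)}"
      using T'[of t] lt1[of t] by auto
  qed auto
qed

lemma psi_adm_series_condensation:
  assumes adm: "psi_adm t0 \<psi>" and lim: "((\<lambda>t. t * \<psi> t) \<longlongrightarrow> 1) at_top"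
  shows "summable (\<lambda>n. - (1 - real n * \<psi> (real n)) * ln (1 - real n * \<psi> (real n)) / real n)
    \<longleftrightarrow> summable (\<lambda>k. (1 - 2 ^ k * \<psi> (2 ^ k)) * ln (1 / (1 - 2 ^ k * \<psi> (2 ^ k))))"
proof -
  define w where "w t = 1 - t * \<psi> t" for t
  define b where "b t = w t * ln (1 / w t) / t" for t
  have tpsi_mono: "mono_on {t0..} (\<lambda>t. t * \<psi> t)"
    using adm unfolding psi_adm_def by auto
  obtain T where T: "t0 \<le> T" "1 \<le> T" and w_small: "\<And>t. T \<le> t \<Longrightarrow> w t \<in> {0<..exp (-1)}"
    using psi_adm_eventually_close_to_one[OF adm lim] unfolding w_def by metis
  have G_nonneg: "0 \<le> w t * ln (1 / w t)" if "T \<le> t" for t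
    using w_small[OF that] x_ln_inverse_nonneg by simp
  have "antimono_on {T..} b"
  proof (rule monotone_onI)
    fix t t' assume t: "t \<in> {T..}" "t' \<in> {T..}" "t \<le> t'"
    then have "t * \<psi> t \<le> t' * \<psi> t'"
      using T by (intro monotone_onD[OF tpsi_mono]) auto
    then have "w t' * ln (1 / w t') \<le> w t * ln (1 / w t)"
      using w_small t unfolding w_def by (intro monotone_onD[OF mono_on_x_ln_inverse]) auto
    then show "b t' \<le> b t"
      unfolding b_def using t T G_nonneg by (intro frac_le) auto
  qed
  moreover have "0 \<le> b t" if "T \<le> t" for t
    using G_nonneg[OF that] that T unfolding b_def by simp
  ultimately have condensed: "summable (\<lambda>n. b (real n)) \<longleftrightarrow> summable (\<lambda>k. 2 ^ k * b (2 ^ k))"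
    by (rule condensation_test_at_top)
  have "eventually (\<lambda>n. - (1 - real n * \<psi> (real n)) * ln (1 - real n * \<psi> (real n)) / real n
      = b (real n)) sequentially"
    using eventually_ge_at_top[of "nat \<lceil>T\<rceil>"]
  proof eventually_elim
    case (elim n)
    then have "T \<le> real n"
      by linarith
    then have "0 < w (real n)"
      using w_small by simp
    then show ?case
      unfolding b_def w_def by (simp add: ln_div minus_divide_left algebra_simps)
  qed
  then have "summable (\<lambda>n. - (1 - real n * \<psi> (real n)) * ln (1 - real n * \<psi> (real n)) / real n)
      \<longleftrightarrow> summable (\<lambda>n. b (real n))"
    by (rule summable_cong)
  also have "\<dots> \<longleftrightarrow> summable (\<lambda>k. w (2 ^ k) * ln (1 / w (2 ^ k)))"
    using condensed unfolding b_def by simp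
  finally show ?thesis
    unfolding w_def .
qed

lemma summable_one_minus_exp_x_ln_inverse_iff:
  fixes c :: "nat \<Rightarrow> real"
  assumes c: "filterlim c (at_right 0) sequentially"
  shows "summable (\<lambda>k. (1 - exp (- 2 * c k)) * ln (1 / (1 - exp (- 2 * c k))))
    \<longleftrightarrow> summable (\<lambda>k. c k * ln (1 / c k))"
proof -
  define G where "G y = y * ln (1 / y)" for y :: real
  have "(\<lambda>y. G (1 - exp (- 2 * y))) \<sim>[at_right 0] (\<lambda>y. 2 * G y)"
    unfolding G_def by real_asymp
  then have "(\<lambda>k. G (1 - exp (- 2 * c k))) \<sim>[sequentially] (\<lambda>k. 2 * G (c k))"
    using asymp_equiv_compose'[OF _ c] by blast
  moreover have "eventually (\<lambda>k. c k \<in> {0<..exp (-1)}) sequentially"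
  proof -
    have c_pos: "eventually (\<lambda>k. 0 < c k) sequentially" and c0: "(c \<longlongrightarrow> 0) sequentially"
      using c unfolding filterlim_at by (auto elim: eventually_mono)
    have "eventually (\<lambda>k. c k < exp (-1)) sequentially"
      using order_tendstoD(2)[OF c0] by simp
    with c_pos show ?thesis
      by eventually_elim simp
  qed
  then have "eventually (\<lambda>k. 0 \<le> 2 * G (c k)) sequentially"
    unfolding G_def by (rule eventually_mono) (simp add: x_ln_inverse_nonneg)
  ultimately have "summable (\<lambda>k. G (1 - exp (- 2 * c k))) \<longleftrightarrow> summable (\<lambda>k. 2 * G (c k))"
    by (rule summable_iff_asymp_equiv)
  then show ?thesis
    unfolding G_def by simp
qed

lemma r_adm_x_ln_inverse_eventually_antimono:
  assumes adm: "r_adm s0 r" and r0: "(r \<longlongrightarrow> 0) at_top"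
  obtains S where "s0 \<le> S" and "antimono_on {S..} (\<lambda>s. r s * ln (1 / r s))"
    and "\<And>s. S \<le> s \<Longrightarrow> 0 \<le> r s * ln (1 / r s)"
proof -
  have pos: "\<And>s. s0 \<le> s \<Longrightarrow> r s > 0" and anti: "antimono_on {s0..} r"
    using adm unfolding r_adm_def by auto
  have "eventually (\<lambda>s. r s < exp (-1)) at_top"
    using order_tendstoD(2)[OF r0] by simp
  then obtain S' where S': "\<And>s. S' \<le> s \<Longrightarrow> r s < exp (-1)"
    by (auto simp: eventually_at_top_linorder)
  define S where "S = max s0 S'"
  have r_small: "r s \<in> {0<..exp (-1)}" if "S \<le> s" for s
    using pos[of s] S'[of s] that unfolding S_def by auto
  show ?thesis
  proof (rule that[of S])
    show "antimono_on {S..} (\<lambda>s. r s * ln (1 / r s))"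
    proof (rule monotone_onI)
      fix s s' assume "s \<in> {S..}" "s' \<in> {S..}" "s \<le> s'"
      then show "r s' * ln (1 / r s') \<le> r s * ln (1 / r s)"
        using r_small monotone_onD[OF anti] unfolding S_def
        by (intro monotone_onD[OF mono_on_x_ln_inverse]) auto
    qed
    show "0 \<le> r s * ln (1 / r s)" if "S \<le> s" for s
      using r_small[OF that] x_ln_inverse_nonneg by simp
  qed (simp add: S_def)
qed

lemma r_adm_grid_bounds:
  assumes adm: "r_adm s0 r" and "s0 \<le> s" and grid: "s - r s = real k * ln 2"
  shows "real k / 2 \<le> s" and "s \<le> real k + r s0"
proof -
  have "1 / 2 \<le> ln (2 :: real)" "ln (2 :: real) \<le> 1"
    using ln2_ge_two_thirds ln_le_minus_one[of 2] by auto
  then have "real k / 2 \<le> real k * ln 2" "real k * ln 2 \<le> real k"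
    using mult_left_mono[of "1 / 2" "ln 2" "real k"] mult_left_le[of "ln 2" "real k"] by auto
  moreover have "0 < r s" "r s \<le> r s0"
    using adm \<open>s0 \<le> s\<close> unfolding r_adm_def monotone_on_def by auto
  ultimately show "real k / 2 \<le> s" "s \<le> real k + r s0"
    using grid by linarith+
qed

lemma r_adm_series_along_grid:
  assumes adm: "r_adm s0 r" and r0: "(r \<longlongrightarrow> 0) at_top"
    and grid: "eventually (\<lambda>k. s0 \<le> x k \<and> x k - r (x k) = real k * ln 2) sequentially"
  shows "summable (\<lambda>k. (1 - exp (- 2 * r (x k))) * ln (1 / (1 - exp (- 2 * r (x k)))))
    \<longleftrightarrow> summable (\<lambda>n. r (real n) * ln (1 / r (real n)))"
proof -
  obtain S where S: "s0 \<le> S" and G_anti: "antimono_on {S..} (\<lambda>s. r s * ln (1 / r s))"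
    and G_nonneg: "\<And>s. S \<le> s \<Longrightarrow> 0 \<le> r s * ln (1 / r s)"
    using r_adm_x_ln_inverse_eventually_antimono[OF adm r0] by blast
  have bounds: "eventually (\<lambda>k. real k / 2 \<le> x k \<and> x k \<le> real k + r s0) sequentially"
    using grid by (rule eventually_mono) (use r_adm_grid_bounds[OF adm] in blast)
  have x_top: "filterlim x at_top sequentially"
  proof (rule filterlim_at_top_mono)
    show "filterlim (\<lambda>k. real k / 2) at_top sequentially"
      by real_asymp
    show "eventually (\<lambda>k. real k / 2 \<le> x k) sequentially"
      using bounds by (rule eventually_mono) simp
  qed
  then have x_large: "eventually (\<lambda>k. S \<le> x k) sequentially"
    by (simp add: filterlim_at_top)
  have "filterlim (\<lambda>k. r (x k)) (at_right 0) sequentially"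
    unfolding filterlim_at
  proof
    have pos: "\<And>s. s0 \<le> s \<Longrightarrow> r s > 0"
      using adm unfolding r_adm_def by auto
    show "eventually (\<lambda>k. r (x k) \<in> {0<..} \<and> r (x k) \<noteq> 0) sequentially"
      using grid by (rule eventually_mono) (use pos in force)
    show "((\<lambda>k. r (x k)) \<longlongrightarrow> 0) sequentially"
      by (rule filterlim_compose[OF r0 x_top])
  qed
  then have "summable (\<lambda>k. (1 - exp (- 2 * r (x k))) * ln (1 / (1 - exp (- 2 * r (x k)))))
      \<longleftrightarrow> summable (\<lambda>k. r (x k) * ln (1 / r (x k)))"
    by (rule summable_one_minus_exp_x_ln_inverse_iff)
  also have "\<dots> \<longleftrightarrow> summable (\<lambda>n. r (real n) * ln (1 / r (real n)))"
  proof
    show "summable (\<lambda>k. r (x k) * ln (1 / r (x k))) \<Longrightarrow> summable (\<lambda>n. r (real n) * ln (1 / r (real n)))"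
      by (rule summable_antimono_comp_imp_summable[OF G_anti G_nonneg])
        (use eventually_conj[OF x_large bounds] in \<open>auto elim: eventually_mono\<close>)
    show "summable (\<lambda>n. r (real n) * ln (1 / r (real n))) \<Longrightarrow> summable (\<lambda>k. r (x k) * ln (1 / r (x k)))"
      by (rule summable_imp_summable_antimono_comp[OF G_anti G_nonneg])
        (use bounds in \<open>auto elim: eventually_mono\<close>)
  qed
  finally show ?thesis .
qed

lemma corresp_summable_iff:
  assumes "psi_adm t0 \<psi>" "r_adm s0 r" "corresp t0 \<psi> s0 r"
    and lim: "((\<lambda>t. t * \<psi> t) \<longlongrightarrow> 1) at_top"
  shows "summable (\<lambda>n. - (1 - real n * \<psi> (real n)) * ln (1 - real n * \<psi> (real n)) / real n)
    \<longleftrightarrow> summable (\<lambda>n. r (real n) * ln (1 / r (real n)))"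
proof -
  obtain \<sigma> where \<sigma>: "\<And>t. exp (s0 - r s0) \<le> t \<Longrightarrow> s0 \<le> \<sigma> t \<and> exp (\<sigma> t - r (\<sigma> t)) = t"
    using r_adm_exp_inverse[OF assms(2)] by metis
  define x where "x k = \<sigma> (2 ^ k)" for k :: nat
  have "filterlim (\<lambda>k::nat. (2 :: real) ^ k) at_top sequentially"
    by real_asymp
  then have "eventually (\<lambda>k. exp (s0 - r s0) \<le> (2 :: real) ^ k) sequentially"
    by (simp add: filterlim_at_top)
  then have grid: "eventually (\<lambda>k. s0 \<le> x k \<and> x k - r (x k) = real k * ln 2
      \<and> 2 ^ k * \<psi> (2 ^ k) = exp (- 2 * r (x k))) sequentially"
  proof eventually_elim
    case (elim k)
    then have x: "s0 \<le> x k" "exp (x k - r (x k)) = 2 ^ k"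
      using \<sigma> unfolding x_def by auto
    then have "x k - r (x k) = real k * ln 2"
      by (metis ln_exp ln_realpow)
    moreover have "\<psi> (2 ^ k) = exp (- x k - r (x k))"
      using assms(3) x unfolding corresp_def by metis
    then have "2 ^ k * \<psi> (2 ^ k) = exp (x k - r (x k)) * exp (- x k - r (x k))"
      using x(2) by simp
    then have "2 ^ k * \<psi> (2 ^ k) = exp (- 2 * r (x k))"
      by (simp flip: exp_add)
    ultimately show ?case
      using x by simp
  qed
  have "summable (\<lambda>k. (1 - 2 ^ k * \<psi> (2 ^ k)) * ln (1 / (1 - 2 ^ k * \<psi> (2 ^ k))))
      \<longleftrightarrow> summable (\<lambda>k. (1 - exp (- 2 * r (x k))) * ln (1 / (1 - exp (- 2 * r (x k)))))"
    using grid by (intro summable_cong) (auto elim: eventually_mono)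
  also have "\<dots> \<longleftrightarrow> summable (\<lambda>n. r (real n) * ln (1 / r (real n)))"
    using grid
    by (intro r_adm_series_along_grid[OF assms(2) corresp_tendsto_r_zero[OF assms(2,3) lim]])
      (auto elim: eventually_mono)
  finally show ?thesis
    unfolding psi_adm_series_condensation[OF assms(1) lim] .
qed

theorem lemma4p1:
  shows "(\<forall>t0 \<psi>. psi_adm t0 \<psi> \<longrightarrow>
           (let s0 = ln t0 / 2 - ln (\<psi> t0) / 2 in
             \<exists>r. r_adm s0 r \<and> corresp t0 \<psi> s0 r \<and>
               (\<forall>r'. r_adm s0 r' \<and> corresp t0 \<psi> s0 r' \<longrightarrow> (\<forall>s\<ge>s0. r' s = r s))))
       \<and> (\<forall>s0 r. r_adm s0 r \<longrightarrow>
           (let t0 = exp (s0 - r s0) in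
             \<exists>\<psi>. psi_adm t0 \<psi> \<and> corresp t0 \<psi> s0 r \<and>
               (\<forall>\<psi>'. psi_adm t0 \<psi>' \<and> corresp t0 \<psi>' s0 r \<longrightarrow> (\<forall>t\<ge>t0. \<psi>' t = \<psi> t))))
       \<and> (\<forall>t0 \<psi> r. psi_adm t0 \<psi> \<longrightarrow>
           r_adm (ln t0 / 2 - ln (\<psi> t0) / 2) r \<longrightarrow>
           corresp t0 \<psi> (ln t0 / 2 - ln (\<psi> t0) / 2) r \<longrightarrow>
           ((\<lambda>t. t * \<psi> t) \<longlongrightarrow> 1) at_top \<longrightarrow>
           (\<not> summable (\<lambda>n::nat. - (1 - real n * \<psi> (real n)) * ln (1 - real n * \<psi> (real n)) / real n)
             \<longleftrightarrow> \<not> summable (\<lambda>n::nat. r (real n) * ln (1 / r (real n)))))"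
proof (intro conjI allI impI)
  fix t0 \<psi> assume adm: "psi_adm t0 \<psi>"
  then show "let s0 = ln t0 / 2 - ln (\<psi> t0) / 2 in
      \<exists>r. r_adm s0 r \<and> corresp t0 \<psi> s0 r \<and>
        (\<forall>r'. r_adm s0 r' \<and> corresp t0 \<psi> s0 r' \<longrightarrow> (\<forall>s\<ge>s0. r' s = r s))"
    using psi_adm_ex_r[OF adm] psi_adm_unique_r[OF adm]
    unfolding Let_def psi_to_s_def[symmetric] by metis
next
  fix s0 r assume adm: "r_adm s0 r"
  then show "let t0 = exp (s0 - r s0) in
      \<exists>\<psi>. psi_adm t0 \<psi> \<and> corresp t0 \<psi> s0 r \<and>
        (\<forall>\<psi>'. psi_adm t0 \<psi>' \<and> corresp t0 \<psi>' s0 r \<longrightarrow> (\<forall>t\<ge>t0. \<psi>' t = \<psi> t))"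
    using r_adm_ex_psi[OF adm] r_adm_unique_psi[OF adm] unfolding Let_def by metis
next
  fix t0 \<psi> r
  assume "psi_adm t0 \<psi>" "r_adm (ln t0 / 2 - ln (\<psi> t0) / 2) r"
    "corresp t0 \<psi> (ln t0 / 2 - ln (\<psi> t0) / 2) r" "((\<lambda>t. t * \<psi> t) \<longlongrightarrow> 1) at_top"
  from corresp_summable_iff[OF this]
  show "\<not> summable (\<lambda>n. - (1 - real n * \<psi> (real n)) * ln (1 - real n * \<psi> (real n)) / real n)
      \<longleftrightarrow> \<not> summable (\<lambda>n. r (real n) * ln (1 / r (real n)))"
    by simp
qed

end
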